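(* Let $A$ be a C*-algebra. Then for each subset $S\subseteq A_+$ the sets $\mathrm{Ann}(S)$ and $\mathrm{Ann}(\mathrm{Ann}(S))$ are C*-subalgebras of $A$, and $xAx\subseteq\mathrm{Ann}(S)$, $yAy\subseteq\mathrm{Ann}(\mathrm{Ann}(S))$ for all $x\in\mathrm{Ann}(S)$, $y\in\mathrm{Ann}(\mathrm{Ann}(S))$. Moreover, the set ${}^d(\mathrm{Ann}(\mathrm{Ann}(S)))\cap{}^d(\mathrm{Ann}(S))$ is a Banach space (a norm-closed linear subspace of $A$).
   Context: For $S\subseteq A$, $\mathrm{Ann}(S)=\{a\in A: as+sa=0\ \forall s\in S\}$. For $V\subseteq A$, ${}^dV=\{a\in A: xay+yax=0 \text{ for all } x,y\in V\}$. $A_+$ is the set of positive elements of $A$. *)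

theory Defs
  imports Complex_Main
begin

text \<open>A C*-algebra: a complex Banach algebra (not necessarily unital, as HOL's class
ring has no unit) with complex scalar multiplication scaleC compatible with the
real one, and an involution adj satisfying the C*-identity.\<close>

class cstar_algebra = banach + real_normed_algebra +
  fixes scaleC :: "complex \<Rightarrow> 'a \<Rightarrow> 'a"
    and adj :: "'a \<Rightarrow> 'a"
  assumes scaleC_of_real: "scaleC (complex_of_real r) x = scaleR r x"
    and scaleC_add_right: "scaleC c (x + y) = scaleC c x + scaleC c y"
    and scaleC_add_left: "scaleC (c + d) x = scaleC c x + scaleC d x"
    and scaleC_scaleC: "scaleC c (scaleC d x) = scaleC (c * d) x"
    and scaleC_one: "scaleC 1 x = x"
    and scaleC_mult_left: "scaleC c x * y = scaleC c (x * y)"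
    and scaleC_mult_right: "x * scaleC c y = scaleC c (x * y)"
    and norm_scaleC: "norm (scaleC c x) = cmod c * norm x"
    and adj_add: "adj (x + y) = adj x + adj y"
    and adj_scaleC: "adj (scaleC c x) = scaleC (cnj c) (adj x)"
    and adj_mult: "adj (x * y) = adj y * adj x"
    and adj_adj: "adj (adj x) = x"
    and cstar_identity: "norm (adj x * x) = norm x ^ 2"

context cstar_algebra
begin

text \<open>Spectrum of a computed in the unitization of A. For a nonzero lambda,
a - lambda*1 is invertible in the unitization iff there is c in A with
(a - lambda)(c - 1/lambda) = 1 = (c - 1/lambda)(a - lambda), i.e. the equations below.
0 always lies in the spectrum computed in the unitization.\<close>
definition cspectrum :: "'a \<Rightarrow> complex set" where
  "cspectrum a = {l. l = 0 \<or>
     \<not> (\<exists>c. a * c - scaleC (1 / l) a - scaleC l c = 0 \<and>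
             c * a - scaleC (1 / l) a - scaleC l c = 0)}"

definition positive :: "'a \<Rightarrow> bool" where
  "positive a \<longleftrightarrow> adj a = a \<and> cspectrum a \<subseteq> complex_of_real ` {0..}"

definition Ann :: "'a set \<Rightarrow> 'a set" where
  "Ann S = {a. \<forall>s\<in>S. a * s + s * a = 0}"

definition dAnn :: "'a set \<Rightarrow> 'a set" where
  "dAnn V = {a. \<forall>x\<in>V. \<forall>y\<in>V. x * a * y + y * a * x = 0}"

definition closed_csubspace :: "'a set \<Rightarrow> bool" where
  "closed_csubspace B \<longleftrightarrow> 0 \<in> B \<and> (\<forall>x\<in>B. \<forall>y\<in>B. x + y \<in> B) \<and>
     (\<forall>c. \<forall>x\<in>B. scaleC c x \<in> B) \<and> closed B"

definition cstar_subalgebra :: "'a set \<Rightarrow> bool" where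
  "cstar_subalgebra B \<longleftrightarrow> closed_csubspace B \<and>
     (\<forall>x\<in>B. \<forall>y\<in>B. x * y \<in> B) \<and> (\<forall>x\<in>B. adj x \<in> B)"

end

end

theory Submission
  imports Defs "HOL-Analysis.Analysis" "HOL-Computational_Algebra.Fundamental_Theorem_Algebra"
begin

text \<open>An element \<open>a\<close> anticommuting with a positive \<open>s\<close> must annihilate it: \<open>a\<close> commutes with \<open>s\<^sup>2\<close>,
  hence with every even polynomial in \<open>s\<close>, and such polynomials approximate \<open>s\<close> in norm because
  \<open>\<parallel>p(s)\<parallel> \<le> sup\<^bsub>[0,\<parallel>s\<parallel>]\<^esub> |p|\<close> (spectral mapping plus the spectral radius formula for self-adjoint
  elements, both proved elementarily in the unitization). So \<open>a s = - s a = s a\<close> gives \<open>a s = s a = 0\<close>.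
  Consequently \<open>Ann S\<close> annihilates \<open>S\<close> on both sides, which makes it closed under products and under
  \<open>x a y\<close>; being also closed under the adjoint, it is a C*-subalgebra. An element \<open>y\<close> anticommuting
  with a C*-subalgebra \<open>B\<close> annihilates it, since \<open>y\<close> commutes and anticommutes with \<open>x\<^sup>*x\<close>, so
  \<open>\<parallel>x y\<parallel>\<^sup>2 = \<parallel>y\<^sup>*x\<^sup>*x y\<parallel> = 0\<close>; this gives the same conclusions for \<open>Ann (Ann S)\<close>.\<close>

hide_const (open) Sigma_Algebra.positive

lemma additive_scaleC_right: "Modules.additive (scaleC c :: 'a::cstar_algebra \<Rightarrow> 'a)"
  by (rule Modules.additive.intro) (rule scaleC_add_right)

lemma additive_scaleC_left: "Modules.additive (\<lambda>c. scaleC c (x :: 'a::cstar_algebra))"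
  by (rule Modules.additive.intro) (rule scaleC_add_left)

lemma additive_adj: "Modules.additive (adj :: 'a::cstar_algebra \<Rightarrow> 'a)"
  by (rule Modules.additive.intro) (rule adj_add)

lemmas scaleC_zero_right [simp] = Modules.additive.zero[OF additive_scaleC_right]
  and scaleC_minus_right = Modules.additive.minus[OF additive_scaleC_right]
  and scaleC_diff_right = Modules.additive.diff[OF additive_scaleC_right]
  and scaleC_sum = Modules.additive.sum[OF additive_scaleC_right]
  and scaleC_zero_left [simp] = Modules.additive.zero[OF additive_scaleC_left]
  and scaleC_minus_left = Modules.additive.minus[OF additive_scaleC_left]
  and adj_zero [simp] = Modules.additive.zero[OF additive_adj]
  and adj_sum = Modules.additive.sum[OF additive_adj]

lemma bounded_linear_scaleC: "bounded_linear (scaleC c :: 'a::cstar_algebra \<Rightarrow> 'a)"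
proof (rule bounded_linear_intro[where K="cmod c"])
  show "scaleC c (r *\<^sub>R x) = r *\<^sub>R scaleC c x" for r and x :: 'a
    by (simp add: scaleC_scaleC mult.commute flip: scaleC_of_real)
qed (simp_all add: scaleC_add_right norm_scaleC mult.commute)

section \<open>The unitization\<close>

datatype 'a unitz = U complex 'a

lemma unitz_mult_assoc_components:
  fixes x y z :: "'a::cstar_algebra"
  shows "scaleC (a*b) z + scaleC c (scaleC a y + scaleC b x + x*y) + (scaleC a y + scaleC b x + x*y)*z
    = scaleC a (scaleC b z + scaleC c y + y*z) + scaleC (b*c) x + x*(scaleC b z + scaleC c y + y*z)"
  apply (simp only: scaleC_add_right scaleC_scaleC distrib_left distrib_right scaleC_mult_left
      scaleC_mult_right mult.assoc)
  apply (simp only: mult.commute[of c a] mult.commute[of c b] add.assoc)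
  apply (simp only: add.left_commute)
  done

instantiation unitz :: (cstar_algebra) ring_1
begin
fun plus_unitz where "U a x + U b y = U (a + b) (x + y)"
fun times_unitz where "U a x * U b y = U (a * b) (scaleC a y + scaleC b x + x * y)"
fun uminus_unitz where "- U a x = U (- a) (- x)"
fun minus_unitz where "U a x - U b y = U (a - b) (x - y)"
definition zero_unitz where "0 = U 0 0"
definition one_unitz where "1 = U 1 0"
instance
proof
  fix p q r :: "'a unitz"
  show "p * q * r = p * (q * r)"
    by (cases p; cases q; cases r) (simp only: times_unitz.simps unitz_mult_assoc_components mult.assoc)
  show "p + q + r = p + (q + r)" by (cases p; cases q; cases r) (simp only: plus_unitz.simps add.assoc)
  show "p + q = q + p" by (cases p; cases q) (simp only: plus_unitz.simps add.commute)
  show "0 + p = p" by (cases p) (simp only: zero_unitz_def plus_unitz.simps add_0_left)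
  show "- p + p = 0"
    by (cases p) (simp only: zero_unitz_def plus_unitz.simps uminus_unitz.simps left_minus)
  show "p - q = p + - q"
    by (cases p; cases q) (simp only: minus_unitz.simps uminus_unitz.simps plus_unitz.simps diff_conv_add_uminus)
  show "1 * p = p" "p * 1 = p" by (cases p; simp add: one_unitz_def scaleC_one)+
  show "(p + q) * r = p * r + q * r" "p * (q + r) = p * q + p * r"
    by (cases p; cases q; cases r; simp add: scaleC_add_right scaleC_add_left algebra_simps)+
  show "(0::'a unitz) \<noteq> 1" by (simp add: zero_unitz_def one_unitz_def)
qed
end

definition ucst :: "complex \<Rightarrow> 'a::cstar_algebra unitz" where "ucst c = U c 0"
definition uemb :: "'a::cstar_algebra \<Rightarrow> 'a unitz" where "uemb x = U 0 x"
fun uscalar :: "'a unitz \<Rightarrow> complex" where "uscalar (U a x) = a"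
fun uvector :: "'a unitz \<Rightarrow> 'a" where "uvector (U a x) = x"

text \<open>Not the C*-norm of the unitization but the \<open>\<ell>\<^sup>1\<close>-norm: submultiplicativity is all that is used.\<close>
fun unorm :: "'a::cstar_algebra unitz \<Rightarrow> real" where "unorm (U a x) = cmod a + norm x"

lemma ucst_add: "ucst (a + b) = (ucst a + ucst b :: 'a::cstar_algebra unitz)"
  by (simp add: ucst_def)

lemma ucst_mult: "ucst (a * b) = (ucst a * ucst b :: 'a::cstar_algebra unitz)"
  by (simp add: ucst_def)

lemma ucst_minus: "ucst (- a) = (- ucst a :: 'a::cstar_algebra unitz)"
  by (simp add: ucst_def)

lemma ucst_diff: "ucst (a - b) = (ucst a - ucst b :: 'a::cstar_algebra unitz)"
  by (simp add: ucst_def)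

lemma ucst_0 [simp]: "ucst 0 = (0 :: 'a::cstar_algebra unitz)"
  by (simp add: ucst_def zero_unitz_def)

lemma ucst_1 [simp]: "ucst 1 = (1 :: 'a::cstar_algebra unitz)"
  by (simp add: ucst_def one_unitz_def)

lemma uemb_add: "uemb (x + y) = uemb x + uemb (y::'a::cstar_algebra)"
  by (simp add: uemb_def)

lemma uemb_minus: "uemb (- x) = - uemb (x::'a::cstar_algebra)"
  by (simp add: uemb_def)

lemma uemb_diff: "uemb (x - y) = uemb x - uemb (y::'a::cstar_algebra)"
  by (simp add: uemb_def)

lemma uemb_mult: "uemb (x * y) = uemb x * uemb (y::'a::cstar_algebra)"
  by (simp add: uemb_def)

lemma uemb_0 [simp]: "uemb 0 = (0 :: 'a::cstar_algebra unitz)"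
  by (simp add: uemb_def zero_unitz_def)

lemma uemb_eq_iff: "uemb x = uemb y \<longleftrightarrow> x = (y::'a::cstar_algebra)"
  by (simp add: uemb_def)

lemma uemb_eq_0_iff: "uemb x = 0 \<longleftrightarrow> x = (0::'a::cstar_algebra)"
  by (simp add: uemb_def zero_unitz_def)

lemma ucst_mult_uemb: "ucst c * uemb x = uemb (scaleC c (x::'a::cstar_algebra))"
  by (simp add: uemb_def ucst_def)

lemma uemb_mult_ucst: "uemb x * ucst c = uemb (scaleC c (x::'a::cstar_algebra))"
  by (simp add: uemb_def ucst_def)

lemma ucst_commute: "ucst c * u = u * (ucst c :: 'a::cstar_algebra unitz)"
  by (cases u) (simp add: ucst_def mult.commute)

lemma of_nat_unitz: "of_nat n = (ucst (of_nat n) :: 'a::cstar_algebra unitz)"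
  by (induction n) (simp_all add: ucst_add)

lemma ucst_sum: "ucst (sum f A) = (\<Sum>i\<in>A. ucst (f i) :: 'a::cstar_algebra unitz)"
  by (induction A rule: infinite_finite_induct) (simp_all add: ucst_add)

lemma uemb_sum: "uemb (sum g A) = (\<Sum>i\<in>A. uemb (g i :: 'a::cstar_algebra))"
  by (induction A rule: infinite_finite_induct) (simp_all add: uemb_add)

lemma uscalar_diff: "uscalar (u - v) = uscalar u - uscalar (v::'a::cstar_algebra unitz)"
  by (cases u; cases v) simp

lemma uscalar_mult: "uscalar (u * v) = uscalar u * uscalar (v::'a::cstar_algebra unitz)"
  by (cases u; cases v) simp

lemma uscalar_ucst [simp]: "uscalar (ucst c :: 'a::cstar_algebra unitz) = c"
  by (simp add: ucst_def)

lemma uscalar_uemb [simp]: "uscalar (uemb (x::'a::cstar_algebra)) = 0"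
  by (simp add: uemb_def)

lemma uscalar_1 [simp]: "uscalar (1 :: 'a::cstar_algebra unitz) = 1"
  by (simp add: one_unitz_def)

lemma unitz_decompose: "u = ucst (uscalar u) + uemb (uvector (u::'a::cstar_algebra unitz))"
  by (cases u) (simp add: ucst_def uemb_def)

lemma unorm_uemb [simp]: "unorm (uemb x) = norm (x::'a::cstar_algebra)"
  by (simp add: uemb_def)

lemma unorm_1_plus_uemb: "unorm (1 + uemb x) = 1 + norm (x::'a::cstar_algebra)"
  by (simp add: one_unitz_def uemb_def)

lemma unorm_nonneg: "0 \<le> unorm u"
  by (cases u) simp

lemma unorm_mult: "unorm (u * v) \<le> unorm u * unorm (v::'a::cstar_algebra unitz)"
proof (cases u; cases v)
  fix a x b y assume [simp]: "u = U a x" "v = U b y"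
  have "norm (scaleC a y + scaleC b x + x * y) \<le> cmod a * norm y + cmod b * norm x + norm x * norm y"
    by (rule order_trans[OF norm_triangle_ineq add_mono[OF order_trans[OF norm_triangle_ineq] norm_mult_ineq]])
       (simp add: norm_scaleC)
  then show ?thesis by (simp add: norm_mult algebra_simps)
qed

lemma unorm_ucst_mult: "unorm (ucst c * u) \<le> cmod c * unorm (u::'a::cstar_algebra unitz)"
  using unorm_mult[of "ucst c" u] by (simp add: ucst_def)

definition uinvertible :: "'a::cstar_algebra unitz \<Rightarrow> bool" where
  "uinvertible u \<longleftrightarrow> (\<exists>v. u * v = 1 \<and> v * u = 1)"

lemma uinvertible_mult: "uinvertible u \<Longrightarrow> uinvertible v \<Longrightarrow> uinvertible (u * v)"
  unfolding uinvertible_def by (metis mult.assoc mult_1_right)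

lemma uinvertible_ucst: "c \<noteq> 0 \<Longrightarrow> uinvertible (ucst c :: 'a::cstar_algebra unitz)"
  unfolding uinvertible_def by (rule exI[of _ "ucst (1/c)"]) (simp flip: ucst_mult)

lemma uinvertible_1: "uinvertible 1"
  unfolding uinvertible_def by (rule exI[of _ 1]) simp

text \<open>\<open>pow_suc n x\<close> is \<open>x\<^bsup>n+1\<^esup>\<close>; the algebra has no unit, so \<open>x\<^sup>0\<close> is not available.\<close>
primrec pow_suc :: "nat \<Rightarrow> 'a::cstar_algebra \<Rightarrow> 'a" where
  "pow_suc 0 x = x" | "pow_suc (Suc n) x = x * pow_suc n x"

lemma uemb_pow_suc: "uemb (pow_suc n x) = uemb x ^ Suc n"
  by (induction n) (simp_all add: uemb_mult)

lemma pow_suc_commute: "x * pow_suc n x = pow_suc n x * x"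
  by (metis uemb_eq_iff uemb_mult uemb_pow_suc power_commutes)

lemma pow_suc_add: "pow_suc (m + n + 1) x = pow_suc m x * pow_suc n x"
proof -
  have "Suc (m + n + 1) = Suc m + Suc n" by simp
  then show ?thesis by (metis uemb_eq_iff uemb_mult uemb_pow_suc power_add)
qed

lemma adj_pow_suc: "adj x = x \<Longrightarrow> adj (pow_suc n x) = pow_suc n x"
  by (induction n) (simp_all add: adj_mult pow_suc_commute)

lemma norm_pow_suc_le: "norm (pow_suc n x) \<le> norm x ^ Suc n"
proof (induction n)
  case (Suc n)
  have "norm (pow_suc (Suc n) x) \<le> norm x * norm (pow_suc n x)" by (simp add: norm_mult_ineq)
  also have "\<dots> \<le> norm x * norm x ^ Suc n" by (rule mult_left_mono[OF Suc]) simp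
  finally show ?case by simp
qed simp

text \<open>The C*-identity gives \<open>\<parallel>y\<^sup>2\<parallel> = \<parallel>y\<parallel>\<^sup>2\<close> for self-adjoint \<open>y\<close>, hence by repeated squaring:\<close>
lemma norm_pow_suc_selfadjoint:
  assumes "adj x = x" shows "norm (pow_suc (2^m - 1) x) = norm x ^ (2^m)"
proof (induction m)
  case (Suc m)
  have e: "2 ^ Suc m - 1 = (2^m - 1) + (2^m - 1) + (1::nat)"
    using one_le_power[of "2::nat" m] by (simp only: power_Suc) arith
  have "norm (pow_suc (2 ^ Suc m - 1) x) = norm (adj (pow_suc (2^m - 1) x) * pow_suc (2^m - 1) x)"
    by (simp only: e pow_suc_add adj_pow_suc[OF assms])
  also have "\<dots> = (norm x ^ 2^m)^2" by (simp only: cstar_identity Suc)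
  finally show ?case by (simp flip: power_mult add: mult.commute)
qed simp

lemma uinvertible_uemb_minus_ucst_if_notin_cspectrum:
  fixes x :: "'a::cstar_algebra"
  assumes "l \<notin> cspectrum x"
  shows "uinvertible (uemb x - ucst l)"
proof -
  obtain c where l: "l \<noteq> 0" and c: "x * c - scaleC (1/l) x - scaleC l c = 0"
      "c * x - scaleC (1/l) x - scaleC l c = 0"
    using assms unfolding cspectrum_def by blast
  have "(uemb x - ucst l) * (uemb c - ucst (1/l)) = 1" "(uemb c - ucst (1/l)) * (uemb x - ucst l) = 1"
    using c l by (simp_all add: uemb_def ucst_def one_unitz_def scaleC_minus_left algebra_simps)
  then show ?thesis unfolding uinvertible_def by blast
qed

text \<open>Neumann series: \<open>-\<Sum>\<^sub>n x\<^sup>n\<^sup>+\<^sup>1 / l\<^sup>n\<^sup>+\<^sup>2\<close> is the \<open>A\<close>-part of the inverse of \<open>x - l\<close>.\<close>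
lemma uinvertible_uemb_minus_ucst_if_norm_less:
  fixes x :: "'a::cstar_algebra"
  assumes "norm x < cmod l" shows "uinvertible (uemb x - ucst l)"
proof -
  have l0: "l \<noteq> 0" using assms norm_ge_zero[of x] by auto
  define f where "f n = scaleC (1 / l ^ (n+2)) (pow_suc n x)" for n
  define r where "r = norm x / cmod l"
  have r: "0 \<le> r" "r < 1" using assms l0 by (auto simp: r_def)
  have bnd: "norm (f n) \<le> (norm x / cmod l ^ 2) * r ^ n" for n
  proof -
    have "norm (f n) = norm (pow_suc n x) / cmod l ^ (n + 2)"
      by (simp add: f_def norm_scaleC norm_divide norm_power norm_mult)
    also have "\<dots> \<le> norm x ^ Suc n / cmod l ^ (n + 2)"
      by (rule divide_right_mono[OF norm_pow_suc_le]) simp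
    also have "\<dots> = (norm x / cmod l ^ 2) * r ^ n"
      by (simp add: r_def power_divide field_simps l0 power_add power2_eq_square)
    finally show ?thesis .
  qed
  have sf: "summable f"
    by (rule summable_comparison_test[OF _ summable_mult[OF summable_geometric[of r], of "norm x / cmod l ^ 2"]])
       (use bnd r in auto)
  define S where "S = suminf f"
  have shift: "scaleC l S = scaleC (1/l) x + (\<Sum>n. f n * x)"
  proof -
    have s2: "summable (\<lambda>n. scaleC l (f n))"
      by (rule bounded_linear.summable[OF bounded_linear_scaleC sf])
    have "scaleC l S = (\<Sum>n. scaleC l (f n))"
      unfolding S_def by (rule bounded_linear.suminf[OF bounded_linear_scaleC sf])
    also have "\<dots> = scaleC (1/l) x + (\<Sum>n. scaleC l (f (Suc n)))"
      using suminf_split_head[OF s2] l0 by (simp add: f_def scaleC_scaleC field_simps)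
    also have "(\<Sum>n. scaleC l (f (Suc n))) = (\<Sum>n. f n * x)"
      by (rule arg_cong[where f=suminf], rule ext)
         (simp add: f_def scaleC_scaleC scaleC_mult_left pow_suc_commute l0 field_simps power_add)
    finally show ?thesis .
  qed
  have shift': "(\<Sum>n. f n * x) = (\<Sum>n. x * f n)"
    by (rule arg_cong[where f=suminf], rule ext)
       (simp add: f_def scaleC_mult_left scaleC_mult_right pow_suc_commute)
  have "x * (- S) - scaleC (1/l) x - scaleC l (- S) = 0" "(- S) * x - scaleC (1/l) x - scaleC l (- S) = 0"
    using shift shift' by (simp_all add: S_def scaleC_minus_right suminf_mult[OF sf] suminf_mult2[OF sf])
  then have "(uemb x - ucst l) * (uemb (- S) - ucst (1/l)) = 1" "(uemb (- S) - ucst (1/l)) * (uemb x - ucst l) = 1"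
    using l0 by (simp_all add: uemb_def ucst_def one_unitz_def scaleC_minus_left algebra_simps)
  then show ?thesis unfolding uinvertible_def by blast
qed

section \<open>The norm of a self-adjoint element is its spectral radius\<close>

text \<open>\<open>inv_part x l\<close> is the \<open>A\<close>-component \<open>c\<close> of \<open>(1 - l x)\<^sup>-\<^sup>1 = 1 + c\<close>; it is meaningless where
  \<open>1 - l x\<close> is not invertible.\<close>
definition inv_part :: "'a::cstar_algebra \<Rightarrow> complex \<Rightarrow> 'a" where
  "inv_part x l = (SOME c. (1 + uemb c) * (1 - ucst l * uemb x) = 1 \<and> (1 - ucst l * uemb x) * (1 + uemb c) = 1)"

lemma inv_part:
  fixes x :: "'a::cstar_algebra"
  assumes "uinvertible (1 - ucst l * uemb x)"
  shows "(1 + uemb (inv_part x l)) * (1 - ucst l * uemb x) = 1"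
    and "(1 - ucst l * uemb x) * (1 + uemb (inv_part x l)) = 1"
proof -
  obtain v where v: "(1 - ucst l * uemb x) * v = 1" "v * (1 - ucst l * uemb x) = 1"
    using assms unfolding uinvertible_def by blast
  have "uscalar v = 1"
    using arg_cong[OF v(1), of uscalar] by (simp add: uscalar_mult uscalar_diff ucst_mult_uemb)
  then have "v = 1 + uemb (uvector v)" using unitz_decompose[of v] by simp
  then have "\<exists>c. (1 + uemb c) * (1 - ucst l * uemb x) = 1 \<and> (1 - ucst l * uemb x) * (1 + uemb c) = 1"
    using v by metis
  from someI_ex[OF this] show "(1 + uemb (inv_part x l)) * (1 - ucst l * uemb x) = 1"
    and "(1 - ucst l * uemb x) * (1 + uemb (inv_part x l)) = 1"
    unfolding inv_part_def by blast+
qed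

text \<open>The resolvent identity.\<close>
lemma norm_inv_part_diff:
  fixes x :: "'a::cstar_algebra"
  assumes l: "uinvertible (1 - ucst l * uemb x)" and m: "uinvertible (1 - ucst m * uemb x)"
  shows "norm (inv_part x l - inv_part x m)
    \<le> (1 + norm (inv_part x l)) * (cmod (l - m) * norm x) * (1 + norm (inv_part x m))"
proof -
  let ?L = "1 + uemb (inv_part x l)" and ?M = "1 + uemb (inv_part x m)"
  have "?L * (ucst (l - m) * uemb x) * ?M
      = ?L * ((1 - ucst m * uemb x) * ?M) - (?L * (1 - ucst l * uemb x)) * ?M"
    by (simp add: ucst_diff algebra_simps)
  also have "\<dots> = uemb (inv_part x l - inv_part x m)"
    by (simp add: inv_part[OF l] inv_part[OF m] uemb_diff)
  finally have "norm (inv_part x l - inv_part x m) = unorm (?L * (ucst (l - m) * uemb x) * ?M)"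
    by (metis unorm_uemb)
  also have "\<dots> \<le> unorm ?L * unorm (ucst (l - m) * uemb x) * unorm ?M"
    by (meson order_trans unorm_mult mult_right_mono unorm_nonneg)
  also have "\<dots> \<le> (1 + norm (inv_part x l)) * (cmod (l - m) * norm x) * (1 + norm (inv_part x m))"
    using unorm_ucst_mult[of "l - m" "uemb x"]
    by (simp add: unorm_1_plus_uemb mult_left_mono mult_right_mono)
  finally show ?thesis .
qed

lemma continuous_on_inv_part:
  fixes x :: "'a::cstar_algebra"
  assumes inv: "\<And>l. l \<in> D \<Longrightarrow> uinvertible (1 - ucst l * uemb x)"
  shows "continuous_on D (inv_part x)"
  unfolding continuous_on_def
proof (intro ballI, subst Lim_null)
  fix m assume m: "m \<in> D"
  define B where "B = 1 + norm (inv_part x m)"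
  have B: "1 \<le> B" by (simp add: B_def)
  have dist_to_0: "((\<lambda>l. cmod (l - m) * norm x) \<longlongrightarrow> 0) (at m within D)"
    by (rule tendsto_mult_left_zero, rule tendsto_norm_zero, rule LIM_zero) (rule tendsto_ident_at)
  then have small: "\<forall>\<^sub>F l in at m within D. cmod (l - m) * norm x * B \<le> 1/2"
    using B by (auto dest!: order_tendstoD(2)[of _ 0 _ "1 / (2 * B)"] elim: eventually_mono
        simp: field_simps)
  moreover have "\<forall>\<^sub>F l in at m within D. l \<in> D"
    by (simp add: eventually_at_filter)
  ultimately have "\<forall>\<^sub>F l in at m within D. norm (inv_part x l - inv_part x m) \<le> 2 * B * B * (cmod (l - m) * norm x)"
  proof eventually_elim
    case (elim l)
    define \<eta> where "\<eta> = cmod (l - m) * norm x"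
    define t where "t = 1 + norm (inv_part x l)"
    have \<eta>: "0 \<le> \<eta>" "\<eta> * B \<le> 1/2" using elim by (simp_all add: \<eta>_def)
    have diff: "norm (inv_part x l - inv_part x m) \<le> t * \<eta> * B"
      using norm_inv_part_diff[OF inv inv] elim m by (simp add: \<eta>_def t_def B_def)
    have "t \<le> B + norm (inv_part x l - inv_part x m)"
      using norm_triangle_ineq2[of "inv_part x l" "inv_part x m"] by (simp add: t_def B_def)
    also have "\<dots> \<le> B + t * (\<eta> * B)" using diff by (simp add: mult.assoc)
    also have "\<dots> \<le> B + t / 2" using mult_left_mono[OF \<eta>(2), of t] by (simp add: t_def)
    finally have "t \<le> 2 * B" by simp
    then have "t * (\<eta> * B) \<le> 2 * B * (\<eta> * B)" using \<eta> B by (intro mult_right_mono) auto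
    with diff show ?case by (simp add: \<eta>_def algebra_simps)
  qed
  moreover have "((\<lambda>l. 2 * B * B * (cmod (l - m) * norm x)) \<longlongrightarrow> 0) (at m within D)"
    using tendsto_mult_right_zero[OF dist_to_0] .
  ultimately show "((\<lambda>l. inv_part x l - inv_part x m) \<longlongrightarrow> 0) (at m within D)"
    by (rule Lim_null_comparison)
qed

lemma sum_roots_of_unity_power_eq_0:
  assumes "0 < k" "k < N"
  shows "(\<Sum>j<N. cis (2 * pi / real N) ^ (j * k)) = 0"
proof -
  define w where "w = cis (2 * pi * real k / real N)"
  have "w \<noteq> 1"
  proof
    assume "w = 1"
    then obtain i :: int where "2 * pi * real k / real N = 2 * pi * of_int i"
      by (auto simp: w_def complex_eq_iff cos_one_2pi_int)
    then have "int k = int N * i" using assms by (simp add: field_simps) (metis of_int_eq_iff of_int_mult of_int_of_nat_eq)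
    moreover have "int N * i \<le> 0 \<or> int N * 1 \<le> int N * i"
      using mult_left_mono[of 1 i "int N"] by (cases "i \<le> 0") (auto simp: mult_nonneg_nonpos)
    ultimately have "k = 0 \<or> N \<le> k" by auto
    then show False using assms by simp
  qed
  moreover have "w ^ N = 1"
  proof -
    have "w ^ N = cis (2 * pi * real k)"
      unfolding w_def Complex.DeMoivre by (rule arg_cong[where f=cis]) (use assms in simp)
    then show ?thesis by (simp add: complex_eq_iff cos_int_2pin sin_int_2pin)
  qed
  moreover have "cis (2 * pi / real N) ^ (j * k) = w ^ j" for j
    using assms by (simp add: w_def Complex.DeMoivre field_simps)
  ultimately show ?thesis by (simp add: geometric_sum)
qed

lemma one_diff_power_eq_noncomm: "(1 - y) * (\<Sum>k<n. y ^ k) = 1 - (y::'a::ring_1) ^ n"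
proof (induction n)
  case (Suc n)
  have "(1 - y) * (\<Sum>k<Suc n. y ^ k) = 1 - y ^ n + (1 - y) * y ^ n"
    by (simp add: distrib_left Suc)
  then show ?case by (simp add: left_diff_distrib)
qed simp

lemma ucst_mult_power: "(ucst c * y) ^ k = ucst (c ^ k) * (y::'a::cstar_algebra unitz) ^ k"
proof (induction k)
  case (Suc k)
  have "(ucst c * y) ^ Suc k = ucst c * (y * ucst (c ^ k)) * y ^ k"
    by (simp add: Suc mult.assoc)
  also have "\<dots> = ucst c * ucst (c ^ k) * (y * y ^ k)"
    by (metis ucst_commute mult.assoc)
  finally show ?case by (simp add: ucst_mult)
qed simp

lemma sum_inverses_over_roots_of_unity:
  fixes y :: "'a::cstar_algebra unitz"
  assumes N: "0 < N" and R: "\<And>j. j < N \<Longrightarrow> R j * (1 - ucst (cis (2 * pi / real N) ^ j) * y) = 1"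
  shows "(\<Sum>j<N. R j) * (1 - y ^ N) = of_nat N"
proof -
  let ?w = "cis (2 * pi / real N)"
  have wN: "(?w ^ j) ^ N = 1" for j
  proof -
    have "?w ^ N = cis (real N * (2 * pi / real N))" by (simp only: Complex.DeMoivre)
    also have "\<dots> = 1" using N by (simp add: complex_eq_iff)
    finally show ?thesis by (simp add: power_mult[symmetric] mult.commute power_mult)
  qed
  have each: "R j * (1 - y ^ N) = (\<Sum>k<N. ucst (?w ^ (j * k)) * y ^ k)" if "j < N" for j
  proof -
    have "R j * (1 - y ^ N) = R j * ((1 - ucst (?w ^ j) * y) * (\<Sum>k<N. (ucst (?w ^ j) * y) ^ k))"
      by (simp only: one_diff_power_eq_noncomm) (simp add: ucst_mult_power wN)
    then show ?thesis
      by (simp add: R[OF that] ucst_mult_power power_mult flip: mult.assoc)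
  qed
  have "(\<Sum>j<N. R j) * (1 - y ^ N) = (\<Sum>j<N. \<Sum>k<N. ucst (?w ^ (j * k)) * y ^ k)"
    by (simp add: sum_distrib_right each)
  also have "\<dots> = (\<Sum>k<N. \<Sum>j<N. ucst (?w ^ (j * k)) * y ^ k)"
    by (rule sum.swap)
  also have "\<dots> = (\<Sum>k<N. ucst (\<Sum>j<N. ?w ^ (j * k)) * y ^ k)"
    by (simp add: ucst_sum sum_distrib_right)
  also have "\<dots> = (\<Sum>k<N. if k = 0 then of_nat N else 0)"
    by (rule sum.cong) (auto simp: sum_roots_of_unity_power_eq_0 of_nat_unitz)
  finally show ?thesis using N by simp
qed

lemma inv_part_average:
  fixes x :: "'a::cstar_algebra"
  assumes N: "0 < N" and inv: "\<And>j. uinvertible (1 - ucst (cis (2 * pi / real N) ^ j * l) * uemb x)"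
  shows "(1 + uemb (scaleC (1 / of_nat N) (\<Sum>j<N. inv_part x (cis (2 * pi / real N) ^ j * l))))
    * (1 - uemb (pow_suc (N - 1) (scaleC l x))) = 1"
proof -
  let ?R = "\<lambda>j. 1 + uemb (inv_part x (cis (2 * pi / real N) ^ j * l))"
  have "(\<Sum>j<N. ?R j) * (1 - (ucst l * uemb x) ^ N) = of_nat N"
    by (rule sum_inverses_over_roots_of_unity[OF N]) (use inv_part(1)[OF inv] in \<open>simp add: ucst_mult mult.assoc\<close>)
  moreover have "(\<Sum>j<N. ?R j) = of_nat N + uemb (\<Sum>j<N. inv_part x (cis (2 * pi / real N) ^ j * l))"
    by (simp add: sum.distrib uemb_sum)
  moreover have "(ucst l * uemb x) ^ N = uemb (pow_suc (N - 1) (scaleC l x))"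
    using N by (simp add: ucst_mult_uemb uemb_pow_suc)
  ultimately have "ucst (1 / of_nat N) * (of_nat N + uemb (\<Sum>j<N. inv_part x (cis (2 * pi / real N) ^ j * l)))
      * (1 - uemb (pow_suc (N - 1) (scaleC l x))) = ucst (1 / of_nat N) * of_nat N"
    by (simp add: mult.assoc)
  then show ?thesis
    using N by (simp add: distrib_left of_nat_unitz ucst_mult_uemb flip: ucst_mult)
qed

lemma norm_quasi_inverse_le:
  fixes t u :: "'a::cstar_algebra"
  assumes "(1 + uemb t) * (1 - uemb u) = 1"
  shows "norm t * (1 - norm u) \<le> norm u" and "norm u * (1 - norm t) \<le> norm t"
proof -
  have "uemb (t - u - t * u) = (1 + uemb t) * (1 - uemb u) - 1"
    by (simp add: uemb_diff uemb_mult uemb_add algebra_simps)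
  then have "t - u - t * u = 0" by (simp only: assms diff_self uemb_eq_0_iff)
  then have tu: "t = u + t * u" "u = t - t * u" by (simp_all only: diff_diff_eq right_minus_eq) (simp add: algebra_simps)
  have "norm t \<le> norm u + norm t * norm u"
    using norm_triangle_ineq[of u "t * u"] norm_mult_ineq[of t u] by (subst tu(1)) linarith
  then show "norm t * (1 - norm u) \<le> norm u" by (simp add: algebra_simps)
  have "norm u \<le> norm t + norm t * norm u"
    using norm_triangle_ineq4[of t "t * u"] norm_mult_ineq[of t u] by (subst tu(2)) linarith
  then show "norm u * (1 - norm t) \<le> norm t" by (simp add: algebra_simps)
qed

lemma norm_average_diff_le:
  fixes f g :: "nat \<Rightarrow> 'a::cstar_algebra"
  assumes "0 < N" and "\<And>j. j < N \<Longrightarrow> norm (f j - g j) \<le> e"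
  shows "norm (scaleC (1 / of_nat N) (\<Sum>j<N. f j) - scaleC (1 / of_nat N) (\<Sum>j<N. g j)) \<le> e"
proof -
  have "norm (scaleC (1 / of_nat N) (\<Sum>j<N. f j) - scaleC (1 / of_nat N) (\<Sum>j<N. g j))
      = norm (\<Sum>j<N. f j - g j) / real N"
    by (simp add: norm_scaleC norm_divide sum_subtractf flip: scaleC_diff_right)
  also have "\<dots> \<le> (\<Sum>j<N. e) / real N"
    by (intro divide_right_mono order_trans[OF norm_sum sum_mono] assms) auto
  finally show ?thesis using assms(1) by simp
qed

text \<open>For self-adjoint \<open>x\<close> the spectral radius is the norm. The proof avoids complex analysis:
  averaging the inverses of \<open>1 - \<omega> r x\<close> over \<open>N\<close>-th roots of unity \<open>\<omega>\<close> inverts \<open>1 - (r x)\<^sup>N\<close>,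
  and \<open>\<parallel>(r x)\<^sup>N\<parallel> = (r \<parallel>x\<parallel>)\<^sup>N\<close> for \<open>N = 2\<^sup>n\<close>. Uniform continuity of the inverse on the closed
  disc transports smallness of the average from \<open>r\<close> slightly below \<open>1/\<parallel>x\<parallel>\<close> to \<open>r'\<close> slightly above,
  which forces \<open>r' \<parallel>x\<parallel> \<le> 1\<close>.\<close>
lemma selfadjoint_norm_le_1:
  fixes x :: "'a::cstar_algebra"
  assumes sa: "adj x = x" and inv: "\<And>l. cmod l \<le> 1 \<Longrightarrow> uinvertible (1 - ucst l * uemb x)"
  shows "norm x \<le> 1"
proof (rule ccontr)
  assume "\<not> norm x \<le> 1"
  then have nx: "1 < norm x" by simp
  define T where "T N r = scaleC (1 / of_nat N) (\<Sum>j<N. inv_part x (cis (2 * pi / real N) ^ j * of_real r))"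
    for N r
  define u where "u N r = pow_suc (N - 1) (scaleC (of_real r) x)" for N r
  have in_disc: "cmod (cis (2 * pi / real N) ^ j * of_real r) \<le> 1" if "0 \<le> r" "r \<le> 1" for N j r
    using that by (simp add: norm_mult norm_power)
  have T_u: "(1 + uemb (T N r)) * (1 - uemb (u N r)) = 1" if "0 < N" "0 \<le> r" "r \<le> 1" for N r
    unfolding T_def u_def by (rule inv_part_average) (use that inv in_disc in auto)
  have norm_u: "norm (u (2^n) r) = (r * norm x) ^ (2^n)" if "0 \<le> r" for n r
    using norm_pow_suc_selfadjoint[of "scaleC (of_real r) x" n] that
    by (simp add: u_def adj_scaleC sa norm_scaleC power_mult_distrib)
  have "uniformly_continuous_on (cball 0 1) (inv_part x)"
    by (intro compact_uniformly_continuous continuous_on_inv_part inv) auto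
  then obtain \<delta> where \<delta>: "0 < \<delta>" and uc: "\<And>l m. cmod l \<le> 1 \<Longrightarrow> cmod m \<le> 1 \<Longrightarrow> dist l m < \<delta>
      \<Longrightarrow> dist (inv_part x l) (inv_part x m) < 1/4"
    unfolding uniformly_continuous_on_def by (metis dist_0_norm mem_cball zero_less_divide_1_iff zero_less_numeral)
  have T_close: "norm (T N r' - T N r) \<le> 1/4"
    if "0 < N" "0 \<le> r" "r \<le> 1" "0 \<le> r'" "r' \<le> 1" "\<bar>r' - r\<bar> < \<delta>" for N r r'
    unfolding T_def
  proof (rule norm_average_diff_le[OF that(1)])
    fix j
    have "dist (cis (2 * pi / real N) ^ j * of_real r') (cis (2 * pi / real N) ^ j * of_real r) = \<bar>r' - r\<bar>"
      by (simp add: dist_norm norm_mult norm_power flip: right_diff_distrib of_real_diff)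
    then show "norm (inv_part x (cis (2 * pi / real N) ^ j * of_real r')
        - inv_part x (cis (2 * pi / real N) ^ j * of_real r)) \<le> 1/4"
      using uc[OF in_disc[OF that(4,5), of N j] in_disc[OF that(2,3), of N j]] that(6)
      by (simp add: dist_norm)
  qed
  define \<rho> where "\<rho> = 1 / norm x"
  have \<rho>: "0 < \<rho>" "\<rho> < 1" "\<rho> * norm x = 1" using nx by (auto simp: \<rho>_def divide_less_eq)
  define r where "r = max 0 (\<rho> - \<delta> / 4)"
  define r' where "r' = min 1 (\<rho> + \<delta> / 4)"
  have "r < \<rho>" "\<rho> < r'" using \<rho> \<delta> by (simp_all add: r_def r'_def)
  with \<rho>(3) nx have "r * norm x < 1" "1 < r' * norm x"
    by (metis mult_strict_right_mono zero_less_one less_trans)+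
  moreover have "0 \<le> r" "r \<le> 1" "0 \<le> r'" "r' \<le> 1" "\<bar>r' - r\<bar> < \<delta>"
    using \<rho> \<delta> by (auto simp: r_def r'_def)
  ultimately have r: "0 \<le> r" "r \<le> 1" "r * norm x < 1" "\<bar>r' - r\<bar> < \<delta>"
    and r': "0 \<le> r'" "r' \<le> 1" "1 < r' * norm x" by simp_all
  obtain n where n: "(r * norm x) ^ n < 1/8"
    using real_arch_pow_inv[of "1/8" "r * norm x"] r by auto
  define N :: nat where "N = 2 ^ n"
  have N: "0 < N" by (simp add: N_def)
  have "norm (u N r) \<le> (r * norm x) ^ n"
    unfolding N_def norm_u[OF r(1)] by (rule power_decreasing) (use r in auto)
  with n have "norm (u N r) \<le> 1/8" by simp
  with norm_quasi_inverse_le(1)[OF T_u[OF N r(1,2)]] have "norm (T N r) \<le> 1/4"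
    using mult_left_mono[of "7/8" "1 - norm (u N r)" "norm (T N r)"] by simp
  with T_close[OF N r(1,2) r'(1,2) r(4)] have "norm (T N r') \<le> 1/2"
    using norm_triangle_ineq2[of "T N r'" "T N r"] by linarith
  with norm_quasi_inverse_le(2)[OF T_u[OF N r'(1,2)]] have "norm (u N r') \<le> 1"
    using mult_left_mono[of "1/2" "1 - norm (T N r')" "norm (u N r')"] by simp
  then have "(r' * norm x) ^ N \<le> 1" using norm_u[OF r'(1)] by (simp add: N_def)
  with r' N show False by (simp add: power_le_one_iff)
qed

lemma selfadjoint_norm_le:
  fixes h :: "'a::cstar_algebra"
  assumes sa: "adj h = h" and \<rho>: "0 < \<rho>"
    and inv: "\<And>l. \<rho> \<le> cmod l \<Longrightarrow> uinvertible (uemb h - ucst l)"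
  shows "norm h \<le> \<rho>"
proof -
  define x where "x = scaleC (of_real (1 / \<rho>)) h"
  have "norm x \<le> 1"
  proof (rule selfadjoint_norm_le_1)
    show "adj x = x" by (simp add: x_def adj_scaleC sa)
    fix l :: complex assume l: "cmod l \<le> 1"
    show "uinvertible (1 - ucst l * uemb x)"
    proof (cases "l = 0")
      case False
      have "\<rho> \<le> cmod (of_real \<rho> / l)"
        using l False \<rho> by (simp add: norm_divide field_simps)
      then have "uinvertible (ucst (- l / of_real \<rho>) * (uemb h - ucst (of_real \<rho> / l)))"
        using False \<rho> by (intro uinvertible_mult uinvertible_ucst inv) simp_all
      also have "ucst (- l / of_real \<rho>) * (uemb h - ucst (of_real \<rho> / l)) = 1 - ucst l * uemb x"
        using False \<rho> by (simp add: right_diff_distrib ucst_mult_uemb x_def scaleC_scaleC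
            ucst_minus uemb_minus scaleC_minus_left divide_inverse flip: ucst_mult)
           (simp add: field_simps)
      finally show ?thesis .
    qed (simp add: uinvertible_1)
  qed
  then show ?thesis using \<rho> by (simp add: x_def norm_scaleC norm_divide field_simps)
qed

section \<open>Polynomial functional calculus for positive elements\<close>

text \<open>\<open>poly_alg s p = p(s) - p(0)\<close>, which makes sense in the non-unital algebra; \<open>poly_unitz s p = p(s)\<close>
  in the unitization.\<close>
definition poly_alg :: "'a::cstar_algebra \<Rightarrow> complex poly \<Rightarrow> 'a" where
  "poly_alg s p = (\<Sum>i<degree p. scaleC (coeff p (Suc i)) (pow_suc i s))"

definition poly_unitz :: "'a::cstar_algebra \<Rightarrow> complex poly \<Rightarrow> 'a unitz" where
  "poly_unitz s p = ucst (coeff p 0) + uemb (poly_alg s p)"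

lemma poly_alg_bound:
  "degree p \<le> n \<Longrightarrow> poly_alg s p = (\<Sum>i<n. scaleC (coeff p (Suc i)) (pow_suc i s))"
  unfolding poly_alg_def by (rule sum.mono_neutral_left) (auto simp: coeff_eq_0)

lemma poly_alg_add: "poly_alg s (p + q) = poly_alg s p + poly_alg s q"
  using poly_alg_bound[of "p + q" "degree p + degree q" s] poly_alg_bound[of p "degree p + degree q" s]
    poly_alg_bound[of q "degree p + degree q" s]
  by (simp add: degree_add_le scaleC_add_left sum.distrib)

lemma poly_alg_smult: "poly_alg s (smult c p) = scaleC c (poly_alg s p)"
  using poly_alg_bound[of "smult c p" "degree p" s]
  by (simp add: poly_alg_def scaleC_sum scaleC_scaleC)

lemma poly_alg_pCons: "poly_alg s (pCons a p) = scaleC (coeff p 0) s + s * poly_alg s p"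
proof -
  have "poly_alg s (pCons a p) = (\<Sum>i<Suc (degree p). scaleC (coeff p i) (pow_suc i s))"
    using poly_alg_bound[of "pCons a p" "Suc (degree p)" s] by (simp add: degree_pCons_le)
  also have "\<dots> = scaleC (coeff p 0) s + (\<Sum>i<degree p. scaleC (coeff p (Suc i)) (pow_suc (Suc i) s))"
    by (simp only: sum.lessThan_Suc_shift pow_suc.simps(1))
  also have "\<dots> = scaleC (coeff p 0) s + s * poly_alg s p"
    by (simp add: poly_alg_def sum_distrib_left scaleC_mult_right)
  finally show ?thesis .
qed

lemma adj_poly_alg:
  assumes "adj s = s" "\<And>i. cnj (coeff p i) = coeff p i"
  shows "adj (poly_alg s p) = poly_alg s p"
  by (simp add: poly_alg_def adj_sum adj_scaleC assms adj_pow_suc)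

lemma poly_unitz_add: "poly_unitz s (p + q) = poly_unitz s p + poly_unitz s q"
  by (simp add: poly_unitz_def poly_alg_add ucst_add uemb_add algebra_simps)

lemma poly_unitz_smult: "poly_unitz s (smult c p) = ucst c * poly_unitz s p"
  by (simp add: poly_unitz_def poly_alg_smult ucst_mult distrib_left ucst_mult_uemb)

lemma poly_unitz_pCons: "poly_unitz s (pCons a p) = ucst a + uemb s * poly_unitz s p"
  by (simp add: poly_unitz_def poly_alg_pCons uemb_add uemb_mult distrib_left uemb_mult_ucst add.assoc)

lemma poly_unitz_mult: "poly_unitz s (p * q) = poly_unitz s p * poly_unitz s q"
proof (induction p rule: pCons_induct)
  case (pCons a p)
  have "poly_unitz s (pCons a p * q) = poly_unitz s (smult a q + pCons 0 (p * q))" by simp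
  also have "\<dots> = poly_unitz s (pCons a p) * poly_unitz s q"
    by (simp add: poly_unitz_add poly_unitz_smult poly_unitz_pCons pCons.IH distrib_right mult.assoc)
  finally show ?case .
qed (simp add: poly_unitz_def poly_alg_def)

lemma poly_unitz_linear: "poly_unitz s [:- z, 1:] = uemb s - ucst z"
  by (simp add: poly_unitz_pCons poly_unitz_def poly_alg_def ucst_minus scaleC_one)

lemma poly_unitz_diff_const:
  "coeff p 0 = 0 \<Longrightarrow> poly_unitz s (p - [:l:]) = uemb (poly_alg s p) - ucst l"
proof -
  assume p0: "coeff p 0 = 0"
  have "p - [:l:] = p + smult (-1) [:l:]" by simp
  then have "poly_unitz s (p - [:l:]) = poly_unitz s p + ucst (-1) * poly_unitz s [:l:]"
    by (simp only: poly_unitz_add poly_unitz_smult)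
  then show ?thesis using p0 by (simp add: poly_unitz_def poly_alg_def ucst_minus)
qed

text \<open>Factor \<open>q\<close> into linear factors: a root in \<open>[0, R]\<close> is excluded, a root outside \<open>[0, \<infinity>)\<close> is not in the
  spectrum, and a root beyond \<open>\<parallel>s\<parallel>\<close> is handled by the Neumann series.\<close>
lemma uinvertible_poly_unitz:
  fixes s :: "'a::cstar_algebra"
  assumes pos: "positive s" and R: "norm s \<le> R" and q: "q \<noteq> 0"
    and no_root: "\<And>t. 0 \<le> t \<Longrightarrow> t \<le> R \<Longrightarrow> poly q (of_real t) \<noteq> 0"
  shows "uinvertible (poly_unitz s q)"
proof -
  have linear: "uinvertible (uemb s - ucst z)" if "poly q z = 0" for z
  proof (cases "z \<in> complex_of_real ` {0..}")
    case True
    then obtain t where t: "z = of_real t" "0 \<le> t" by auto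
    with no_root[of t] that R have "norm s < cmod z" by force
    then show ?thesis by (rule uinvertible_uemb_minus_ucst_if_norm_less)
  next
    case False
    then have "z \<notin> cspectrum s" using pos unfolding cstar_algebra_class.positive_def by blast
    then show ?thesis by (rule uinvertible_uemb_minus_ucst_if_notin_cspectrum)
  qed
  have "uinvertible (poly_unitz s (\<Prod>z\<in>#M. [:-z, 1:]))" if "\<forall>z\<in>#M. poly q z = 0" for M
    using that
  proof (induction M)
    case empty then show ?case by (simp add: poly_unitz_def poly_alg_def uinvertible_1)
  next
    case (add z M)
    have "(\<Prod>y\<in>#add_mset z M. [:-y, 1:]) = [:-z, 1:] * (\<Prod>y\<in>#M. [:-y, 1:])" by simp
    with add show ?case
      by (simp only: poly_unitz_mult poly_unitz_linear) (simp add: uinvertible_mult linear)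
  qed
  then have "uinvertible (ucst (lead_coeff q) * poly_unitz s (\<Prod>z\<in>#proots q. [:-z, 1:]))"
    using q by (intro uinvertible_mult uinvertible_ucst) auto
  then show ?thesis
    by (metis poly_unitz_smult complex_poly_decompose_multiset)
qed

lemma norm_poly_alg_le:
  fixes s :: "'a::cstar_algebra"
  assumes pos: "positive s" and R: "norm s \<le> R"
    and real: "\<And>i. cnj (coeff p i) = coeff p i" and p0: "coeff p 0 = 0"
    and bound: "\<And>t. 0 \<le> t \<Longrightarrow> t \<le> R \<Longrightarrow> cmod (poly p (of_real t)) \<le> \<epsilon>"
  shows "norm (poly_alg s p) \<le> \<epsilon>"
proof (rule field_le_epsilon)
  fix d :: real assume d: "0 < d"
  have "0 \<le> R" using R norm_ge_zero[of s] by linarith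
  then have "0 \<le> \<epsilon>" using order_trans[OF norm_ge_zero bound[of 0]] by simp
  show "norm (poly_alg s p) \<le> \<epsilon> + d"
  proof (rule selfadjoint_norm_le)
    show "adj (poly_alg s p) = poly_alg s p"
      using pos real by (intro adj_poly_alg) (simp_all add: cstar_algebra_class.positive_def)
    show "0 < \<epsilon> + d" using \<open>0 \<le> \<epsilon>\<close> d by simp
    fix l assume l: "\<epsilon> + d \<le> cmod l"
    have "uinvertible (poly_unitz s (p - [:l:]))"
    proof (rule uinvertible_poly_unitz[OF pos R])
      show "p - [:l:] \<noteq> 0" using p0 l \<open>0 \<le> \<epsilon>\<close> d by (auto dest: arg_cong[of _ _ "\<lambda>q. coeff q 0"])
      fix t :: real assume "0 \<le> t" "t \<le> R"
      then show "poly (p - [:l:]) (of_real t) \<noteq> 0" using bound l d by force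
    qed
    then show "uinvertible (uemb (poly_alg s p) - ucst l)" by (simp add: poly_unitz_diff_const[OF p0])
  qed
qed

text \<open>Weierstrass approximation of \<open>sqrt\<close> on \<open>[0, R\<^sup>2]\<close>, composed with \<open>t \<mapsto> t\<^sup>2\<close>.\<close>
lemma even_poly_approx_ident:
  assumes e: "0 < e" and R: "0 \<le> R"
  obtains q :: "complex poly" where "\<And>i. cnj (coeff q i) = coeff q i" "\<And>i. odd i \<Longrightarrow> coeff q i = 0"
    "coeff q 0 = 0" "\<And>t. 0 \<le> t \<Longrightarrow> t \<le> R \<Longrightarrow> cmod (poly q (of_real t) - of_real t) \<le> e"
proof -
  have "continuous_on {0..R^2} sqrt" by (intro continuous_intros)
  then obtain g where g: "real_polynomial_function g" "\<And>x. x \<in> {0..R^2} \<Longrightarrow> \<bar>sqrt x - g x\<bar> < e/2"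
    using Stone_Weierstrass_real_polynomial_function[of "{0..R^2}" sqrt "e/2"] e by auto
  obtain b n where gb: "g = (\<lambda>x. \<Sum>i\<le>n. b i * x ^ i)"
    using g(1) unfolding real_polynomial_function_iff_sum by blast
  define q :: "complex poly" where "q = (\<Sum>i\<in>{1..n}. monom (of_real (b i)) (2 * i))"
  have coeff_q: "coeff q m = (\<Sum>i\<in>{1..n}. if 2 * i = m then of_real (b i) else 0)" for m
    by (simp add: q_def coeff_sum)
  show thesis
  proof (rule that)
    show "cnj (coeff q i) = coeff q i" for i
      by (simp add: coeff_q cnj_sum if_distrib cong: if_cong)
    show "odd i \<Longrightarrow> coeff q i = 0" for i by (auto simp: coeff_q intro!: sum.neutral)
    show "coeff q 0 = 0" by (simp add: coeff_q)
    fix t :: real assume t: "0 \<le> t" "t \<le> R"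
    have split: "g x = b 0 + (\<Sum>i\<in>{1..n}. b i * x ^ i)" for x
    proof -
      have "{..n} = insert 0 {1..n}" by auto
      then show ?thesis by (simp add: gb)
    qed
    define D where "D = (\<Sum>i\<in>{1..n}. b i * (t^2)^i)"
    have "\<bar>t - (b 0 + D)\<bar> < e/2"
      using g(2)[of "t^2"] split[of "t^2"] t by (simp add: D_def power_mono)
    moreover have "\<bar>b 0\<bar> < e/2"
      using g(2)[of 0] R by (simp add: gb zero_power)
    ultimately have "\<bar>D - t\<bar> \<le> e" by linarith
    moreover have "poly q (of_real t) - of_real t = of_real (D - t)"
      by (simp add: q_def D_def poly_sum poly_monom power_mult)
    ultimately show "cmod (poly q (of_real t) - of_real t) \<le> e" by (metis norm_of_real)
  qed
qed

lemma pow_suc_odd_commute: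
  fixes a s :: "'a::cstar_algebra"
  assumes "a * (s * s) = (s * s) * a"
  shows "a * pow_suc (2 * k + 1) s = pow_suc (2 * k + 1) s * a"
proof (induction k)
  case (Suc k)
  have "pow_suc (2 * Suc k + 1) s = (s * s) * pow_suc (2 * k + 1) s"
    by (simp add: mult.assoc)
  then show ?case by (metis Suc assms mult.assoc)
qed (use assms in \<open>simp add: mult.assoc\<close>)

lemma poly_alg_even_commute:
  fixes a s :: "'a::cstar_algebra"
  assumes "a * (s * s) = (s * s) * a" and "\<And>i. odd i \<Longrightarrow> coeff q i = 0"
  shows "a * poly_alg s q = poly_alg s q * a"
proof -
  have "a * scaleC (coeff q (Suc i)) (pow_suc i s) = scaleC (coeff q (Suc i)) (pow_suc i s) * a" for i
  proof (cases "even i")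
    case True
    then show ?thesis by (simp add: assms(2))
  next
    case False
    then obtain k where "i = 2 * k + 1" by (metis oddE)
    then show ?thesis using pow_suc_odd_commute[OF assms(1), of k]
      by (simp add: scaleC_mult_left scaleC_mult_right)
  qed
  then show ?thesis by (simp add: poly_alg_def sum_distrib_left sum_distrib_right)
qed

lemma anticommute_positive_imp_commute:
  fixes a s :: "'a::cstar_algebra"
  assumes pos: "positive s" and anti: "a * s + s * a = 0"
  shows "a * s = s * a"
proof -
  have as: "a * s = - (s * a)" using anti by (simp add: eq_neg_iff_add_eq_0)
  have s2: "a * (s * s) = (s * s) * a"
    by (metis as minus_mult_left minus_mult_right minus_minus mult.assoc)
  have bound: "norm (a * s - s * a) \<le> 2 * norm a * e" if e: "0 < e" for e
  proof -
    obtain q where real: "\<And>i. cnj (coeff q i) = coeff q i" and even: "\<And>i. odd i \<Longrightarrow> coeff q i = 0"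
      and q0: "coeff q 0 = 0"
      and approx: "\<And>t. 0 \<le> t \<Longrightarrow> t \<le> norm s \<Longrightarrow> cmod (poly q (of_real t) - of_real t) \<le> e"
      using even_poly_approx_ident[OF e norm_ge_zero] by blast
    have "poly_alg s (q - [:0, 1:]) = poly_alg s q - s"
    proof -
      have "q - [:0, 1:] = q + smult (-1) [:0, 1:]" by simp
      then show ?thesis
        by (simp only: poly_alg_add poly_alg_smult) (simp add: poly_alg_def scaleC_minus_left scaleC_one)
    qed
    moreover have "norm (poly_alg s (q - [:0, 1:])) \<le> e"
      using real q0 approx by (intro norm_poly_alg_le[OF pos order_refl]) (simp_all add: coeff_pCons split: nat.split)
    ultimately have d: "norm (poly_alg s q - s) \<le> e" by simp
    have "a * s - s * a = (poly_alg s q - s) * a - a * (poly_alg s q - s)"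
      using poly_alg_even_commute[OF s2 even] by (simp add: algebra_simps)
    then have "norm (a * s - s * a) \<le> norm (poly_alg s q - s) * norm a + norm a * norm (poly_alg s q - s)"
      by (metis norm_triangle_le_diff norm_mult_ineq add_mono)
    also have "\<dots> \<le> e * norm a + norm a * e"
      using d by (intro add_mono mult_right_mono mult_left_mono) simp_all
    finally show ?thesis by (simp add: mult_ac)
  qed
  have "norm (a * s - s * a) \<le> 0"
  proof (rule field_le_epsilon)
    fix d :: real assume d: "0 < d"
    have "2 * n * (d / (2 * n + 1)) \<le> d" if "0 \<le> n" for n :: real
      using d that by (simp add: field_simps)
    moreover have "norm (a * s - s * a) \<le> 2 * norm a * (d / (2 * norm a + 1))"
      using d by (intro bound) (simp add: add_nonneg_pos)
    ultimately show "norm (a * s - s * a) \<le> 0 + d"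
      using norm_ge_zero[of a] by (metis add_0 order_trans)
  qed
  then show ?thesis by simp
qed

section \<open>Annihilators\<close>

lemma closed_csubspace_Ann: "closed_csubspace (Ann (T :: 'a::cstar_algebra set))"
  unfolding cstar_algebra_class.closed_csubspace_def
proof (intro conjI ballI allI)
  have "Ann T = (\<Inter>t\<in>T. {a. a * t + t * a = 0})"
    by (auto simp: cstar_algebra_class.Ann_def)
  moreover have "closed {a. a * t + t * a = (0::'a)}" for t
    by (intro closed_Collect_eq continuous_intros)
  ultimately show "closed (Ann T)" by auto
  show "0 \<in> Ann T" by (simp add: cstar_algebra_class.Ann_def)
  fix x y c assume x: "x \<in> Ann T"
  show "scaleC c x \<in> Ann T"
    using x by (simp add: cstar_algebra_class.Ann_def scaleC_mult_left scaleC_mult_right flip: scaleC_add_right)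
  assume "y \<in> Ann T"
  with x show "x + y \<in> Ann T"
    by (simp add: cstar_algebra_class.Ann_def algebra_simps)
qed

lemma closed_csubspace_dAnn: "closed_csubspace (dAnn (V :: 'a::cstar_algebra set))"
  unfolding cstar_algebra_class.closed_csubspace_def
proof (intro conjI ballI allI)
  have "dAnn V = (\<Inter>x\<in>V. \<Inter>y\<in>V. {a. x * a * y + y * a * x = 0})"
    by (auto simp: cstar_algebra_class.dAnn_def)
  moreover have "closed {a. x * a * y + y * a * x = (0::'a)}" for x y
    by (intro closed_Collect_eq continuous_intros)
  ultimately show "closed (dAnn V)" by (simp add: closed_INT)
  show "0 \<in> dAnn V" by (simp add: cstar_algebra_class.dAnn_def)
  fix a b c assume a: "a \<in> dAnn V"
  show "scaleC c a \<in> dAnn V"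
    using a by (simp add: cstar_algebra_class.dAnn_def scaleC_mult_left scaleC_mult_right flip: scaleC_add_right)
  assume b: "b \<in> dAnn V"
  show "a + b \<in> dAnn V"
    unfolding cstar_algebra_class.dAnn_def
  proof (intro CollectI ballI)
    fix x y assume "x \<in> V" "y \<in> V"
    then have "x * a * y + y * a * x = 0" "x * b * y + y * b * x = 0"
      using a b by (auto simp: cstar_algebra_class.dAnn_def)
    then show "x * (a + b) * y + y * (a + b) * x = 0"
      by (simp add: distrib_left distrib_right) (metis add.assoc add.left_commute add_0_right)
  qed
qed

lemma closed_csubspace_Int:
  "closed_csubspace A \<Longrightarrow> closed_csubspace B \<Longrightarrow> closed_csubspace (A \<inter> (B :: 'a::cstar_algebra set))"
  unfolding cstar_algebra_class.closed_csubspace_def by auto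

lemma adj_mem_Ann:
  fixes T :: "'a::cstar_algebra set"
  assumes "\<And>t. t \<in> T \<Longrightarrow> adj t \<in> T" and "x \<in> Ann T"
  shows "adj x \<in> Ann T"
  unfolding cstar_algebra_class.Ann_def
proof (intro CollectI ballI)
  fix t assume "t \<in> T"
  then have "x * adj t + adj t * x = 0" using assms by (simp add: cstar_algebra_class.Ann_def)
  moreover have "adj (x * adj t + adj t * x) = t * adj x + adj x * t"
    by (simp add: adj_add adj_mult adj_adj)
  ultimately show "adj x * t + t * adj x = 0" by (simp add: add.commute)
qed

lemma mult_mem_Ann:
  fixes T :: "'a::cstar_algebra set"
  assumes ann: "\<And>x t. x \<in> Ann T \<Longrightarrow> t \<in> T \<Longrightarrow> x * t = 0 \<and> t * x = 0"
    and x: "x \<in> Ann T" and y: "y \<in> Ann T"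
  shows "x * y \<in> Ann T" and "x * b * y \<in> Ann T"
proof -
  have "x * y * t + t * (x * y) = x * (y * t) + (t * x) * y"
    "x * b * y * t + t * (x * b * y) = x * b * (y * t) + (t * x) * b * y" for t
    by (simp_all add: mult.assoc)
  then have "x * y * t + t * (x * y) = 0" "x * b * y * t + t * (x * b * y) = 0" if "t \<in> T" for t
    using ann[OF x that] ann[OF y that] by simp_all
  then show "x * y \<in> Ann T" "x * b * y \<in> Ann T" by (simp_all add: cstar_algebra_class.Ann_def)
qed

lemma Ann_cstar_subalgebra:
  fixes T :: "'a::cstar_algebra set"
  assumes "\<And>t. t \<in> T \<Longrightarrow> adj t \<in> T"
    and "\<And>x t. x \<in> Ann T \<Longrightarrow> t \<in> T \<Longrightarrow> x * t = 0 \<and> t * x = 0"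
  shows "cstar_subalgebra (Ann T)"
  unfolding cstar_algebra_class.cstar_subalgebra_def
  using closed_csubspace_Ann adj_mem_Ann[OF assms(1)] mult_mem_Ann(1)[OF assms(2)] by blast

lemma Ann_positive_annihilates:
  fixes S :: "'a::cstar_algebra set"
  assumes "\<forall>s\<in>S. positive s" and "x \<in> Ann S" and "s \<in> S"
  shows "x * s = 0 \<and> s * x = 0"
proof -
  have anti: "x * s + s * x = 0" using assms(2,3) by (simp add: cstar_algebra_class.Ann_def)
  then have "x * s = s * x" using assms(1,3) anticommute_positive_imp_commute by blast
  with anti have "scaleR 2 (x * s) = 0" by (simp add: scaleR_2)
  with \<open>x * s = s * x\<close> show ?thesis by simp
qed

lemma Ann_cstar_subalgebra_annihilates:
  fixes B :: "'a::cstar_algebra set"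
  assumes B: "cstar_subalgebra B" and y: "y \<in> Ann B" and x: "x \<in> B"
  shows "x * y = 0 \<and> y * x = 0"
proof -
  have xx: "adj x \<in> B" "adj x * x \<in> B"
    using B x by (auto simp: cstar_algebra_class.cstar_subalgebra_def)
  have anti: "y * b = - (b * y)" if "b \<in> B" for b
    using y that by (simp add: cstar_algebra_class.Ann_def eq_neg_iff_add_eq_0)
  have "y * (adj x * x) = - (adj x * (y * x))" by (simp add: anti[OF xx(1)] flip: mult.assoc)
  also have "\<dots> = adj x * x * y" by (simp add: anti[OF x] mult.assoc)
  finally have "y * (adj x * x) = adj x * x * y" .
  with anti[OF xx(2)] have "scaleR 2 (adj x * x * y) = 0" by (simp add: scaleR_2 eq_neg_iff_add_eq_0)
  then have "adj (x * y) * (x * y) = 0" by (simp add: adj_mult mult.assoc)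
  then have "x * y = 0" using cstar_identity[of "x * y"] by simp
  with anti[OF x] show ?thesis by simp
qed

theorem lemma2:
  fixes S :: "'a::cstar_algebra set"
  assumes "\<forall>s\<in>S. positive s"
  shows "cstar_subalgebra (Ann S) \<and> cstar_subalgebra (Ann (Ann S)) \<and>
    (\<forall>x\<in>Ann S. \<forall>a. x * a * x \<in> Ann S) \<and>
    (\<forall>y\<in>Ann (Ann S). \<forall>a. y * a * y \<in> Ann (Ann S)) \<and>
    closed_csubspace (dAnn (Ann (Ann S)) \<inter> dAnn (Ann S))"
proof -
  have ann_S: "\<And>x s. x \<in> Ann S \<Longrightarrow> s \<in> S \<Longrightarrow> x * s = 0 \<and> s * x = 0"
    using Ann_positive_annihilates[OF assms] by blast
  have "\<And>s. s \<in> S \<Longrightarrow> adj s \<in> S"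
    using assms by (simp add: cstar_algebra_class.positive_def)
  then have sub_S: "cstar_subalgebra (Ann S)" using ann_S by (rule Ann_cstar_subalgebra)
  have ann_AS: "\<And>y x. y \<in> Ann (Ann S) \<Longrightarrow> x \<in> Ann S \<Longrightarrow> y * x = 0 \<and> x * y = 0"
    using Ann_cstar_subalgebra_annihilates[OF sub_S] by blast
  have "\<And>x. x \<in> Ann S \<Longrightarrow> adj x \<in> Ann S"
    using sub_S by (simp add: cstar_algebra_class.cstar_subalgebra_def)
  then have "cstar_subalgebra (Ann (Ann S))" using ann_AS by (rule Ann_cstar_subalgebra)
  with sub_S show ?thesis
    using mult_mem_Ann(2)[OF ann_S] mult_mem_Ann(2)[OF ann_AS]
      closed_csubspace_Int[OF closed_csubspace_dAnn closed_csubspace_dAnn] by simp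
qed

end
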